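(* Let $\mathcal A$ be a finite set, $\mathcal R\subset F(\mathcal A)$ finite, $\phi:F(\mathcal A)\to F(\mathcal A)$ a homomorphism, $G$ the group with presentation $\mathcal P=\langle t,\mathcal A:\mathcal R,\ t^{-1}at=\phi(a)\ (a\in\mathcal A)\rangle$, $X$ its Cayley 2-complex, and $\Lambda\subset X$ the Cayley graph of $A=\langle\mathcal A\rangle\le G$ with respect to $\mathcal A$ (containing the identity vertex). For each $\mathcal A$-edge $e$ of $X$ let $H_e:[0,1]\times[0,\infty)\to X$ be the strip map described in the context. If $C\subset X$ is compact, then there are only finitely many edges $e$ of $\Lambda$ such that the image of $H_e$ intersects $C$.
   Context: The Cayley 2-complex $X$ of $\mathcal P$ is the simply connected 2-complex whose 1-skeleton is the Cayley graph of $G$ with respect to $\mathcal A\cup\{t\}$ (vertex set $G$), with a 2-cell at each vertex for each relator. $\Lambda$ is the subgraph with vertex set $A$ and the $\mathcal A$-labeled edges between them. Strip map: let $e$ be an edge from $v$ to $w$ with label $a\in\mathcal A$. For each integer $k\ge0$, the edge path at $vt^k$ reading the word $\phi^k(a)$ ends at $wt^k$; the conjugation 2-cells (with boundaries $b\,t\,\phi(b)^{-1}t^{-1}$, $b\in\mathcal A^{\pm1}$) attached along the edges of this path form a strip whose boundary consists of the path labeled $\phi^k(a)$ at $vt^k$, the $t$-edge from $vt^k$ to $vt^{k+1}$, the path labeled $\phi^{k+1}(a)$ at $vt^{k+1}$, and the $t$-edge from $wt^k$ to $wt^{k+1}$. $H_e$ maps $[0,1]\times[k,k+1]$ onto this strip,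 with $[0,1]\times\{k\}$ going to the path labeled $\phi^k(a)$ and $\{0\}\times[k,k+1]$, $\{1\}\times[k,k+1]$ going to the $t$-edges at $vt^k$, $wt^k$. In particular $H_e(x,0)=e(x)$ and $H_e(0,\cdot)$, $H_e(1,\cdot)$ are the edge path rays at $v$, $w$ all of whose edges are labeled $t$. *)

theory Defs
  imports "HOL-Analysis.Analysis"
begin

text \<open>Generators of the presentation P: the stable letter t (T) and the elements of the
  finite set A (A a).  A letter is a generator with an exponent sign (True = +1, False = -1).\<close>

datatype 'a gen = T | A 'a

text \<open>2-cells: one for each relator r in R, and one conjugation cell for each a in A
  (with boundary word  a t phi(a)^-1 t^-1, a cyclic conjugate of t^-1 a t phi(a)^-1).\<close>
datatype 'a cell = RelR "('a \<times> bool) list" | RelC 'a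

type_synonym 'a gword = "('a gen \<times> bool) list"

definition linv :: "'x \<times> bool \<Rightarrow> 'x \<times> bool" where
  "linv l = (fst l, \<not> snd l)"

definition winv :: "('x \<times> bool) list \<Rightarrow> ('x \<times> bool) list" where
  "winv w = rev (map linv w)"

definition reduced :: "('x \<times> bool) list \<Rightarrow> bool" where
  "reduced w \<longleftrightarrow> (\<forall>i. Suc i < length w \<longrightarrow> w ! Suc i \<noteq> linv (w ! i))"

text \<open>Elements of the free group F(A) are represented by reduced words over A.\<close>
definition free_word :: "'a set \<Rightarrow> ('a \<times> bool) list \<Rightarrow> bool" where
  "free_word Ag w \<longleftrightarrow> set w \<subseteq> Ag \<times> UNIV \<and> reduced w"

fun red_step :: "'x \<times> bool \<Rightarrow> ('x \<times> bool) list \<Rightarrow> ('x \<times> bool) list" where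
  "red_step l [] = [l]"
| "red_step l (m # r) = (if m = linv l then r else l # m # r)"

definition reduce :: "('x \<times> bool) list \<Rightarrow> ('x \<times> bool) list" where
  "reduce w = foldr red_step w []"

definition lift :: "('a \<times> bool) list \<Rightarrow> 'a gword" where
  "lift w = map (\<lambda>(a, b). (A a, b)) w"

text \<open>The homomorphism phi of F(A) is given by the images phi a of the generators.\<close>
definition phil :: "('a \<Rightarrow> ('a \<times> bool) list) \<Rightarrow> 'a \<times> bool \<Rightarrow> ('a \<times> bool) list" where
  "phil phi l = (if snd l then phi (fst l) else winv (phi (fst l)))"

fun phipow :: "('a \<Rightarrow> ('a \<times> bool) list) \<Rightarrow> nat \<Rightarrow> 'a \<Rightarrow> ('a \<times> bool) list" where
  "phipow phi 0 a = [(a, True)]"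
| "phipow phi (Suc k) a = reduce (concat (map (phil phi) (phipow phi k a)))"

definition gens :: "'a set \<Rightarrow> 'a gen set" where
  "gens Ag = insert T (A ` Ag)"

definition valid_word :: "'a set \<Rightarrow> 'a gword \<Rightarrow> bool" where
  "valid_word Ag w \<longleftrightarrow> set w \<subseteq> gens Ag \<times> UNIV"

definition cells :: "'a set \<Rightarrow> ('a \<times> bool) list set \<Rightarrow> 'a cell set" where
  "cells Ag Rs = RelR ` Rs \<union> RelC ` Ag"

fun bword :: "('a \<Rightarrow> ('a \<times> bool) list) \<Rightarrow> 'a cell \<Rightarrow> 'a gword" where
  "bword phi (RelR r) = lift r"
| "bword phi (RelC a) = [(A a, True), (T, True)] @ winv (lift (phi a)) @ [(T, False)]"

inductive weq :: "'a set \<Rightarrow> ('a \<times> bool) list set \<Rightarrow> ('a \<Rightarrow> ('a \<times> bool) list)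
    \<Rightarrow> 'a gword \<Rightarrow> 'a gword \<Rightarrow> bool"
  for Ag Rs phi where
  weq_refl: "weq Ag Rs phi w w"
| weq_sym: "weq Ag Rs phi w w' \<Longrightarrow> weq Ag Rs phi w' w"
| weq_trans: "weq Ag Rs phi u v \<Longrightarrow> weq Ag Rs phi v w \<Longrightarrow> weq Ag Rs phi u w"
| weq_cancel: "l \<in> gens Ag \<times> UNIV \<Longrightarrow> weq Ag Rs phi (u @ [l, linv l] @ v) (u @ v)"
| weq_rel: "c \<in> cells Ag Rs \<Longrightarrow> weq Ag Rs phi (u @ bword phi c @ v) (u @ v)"

section \<open>The Cayley 2-complex as a quotient of a disjoint union of cells\<close>

text \<open>Raw points: vertices (labelled by words representing elements of G), points of edges
  (edge at vertex w with label x, from w to w x, parameter in [0,1]) and points of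
  2-cells (2-cell at vertex w for relator c, parameter in the closed unit disc).\<close>
datatype 'a raw = RV "'a gword" | RE "'a gword" "'a gen" real | RC "'a gword" "'a cell" complex

definition rawpts :: "'a set \<Rightarrow> ('a \<times> bool) list set \<Rightarrow> 'a raw set" where
  "rawpts Ag Rs =
     {RV w | w. valid_word Ag w}
   \<union> {RE w x \<tau> | w x \<tau>. valid_word Ag w \<and> x \<in> gens Ag \<and> \<tau> \<in> {0..1}}
   \<union> {RC w c z | w c z. valid_word Ag w \<and> c \<in> cells Ag Rs \<and> z \<in> cball 0 1}"

text \<open>Attaching map of the 2-cell for c at vertex w: the boundary circle is divided into
  length(bword c) arcs, the j-th arc traversing the edge read by the j-th letter.\<close>
definition attach :: "('a \<Rightarrow> ('a \<times> bool) list) \<Rightarrow> 'a gword \<Rightarrow> 'a cell \<Rightarrow> complex \<Rightarrow> 'a raw" where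
  "attach phi w c z =
     (let p = bword phi c; n = length p; s = Arg2pi z / (2 * pi) in
      if n = 0 then RV w
      else (let j = nat \<lfloor>real n * s\<rfloor>; \<tau> = real n * s - real j; l = p ! j in
            if snd l then RE (w @ take j p) (fst l) \<tau>
            else RE (w @ take j p @ [l]) (fst l) (1 - \<tau>)))"

inductive_set xgen :: "'a set \<Rightarrow> ('a \<times> bool) list set \<Rightarrow> ('a \<Rightarrow> ('a \<times> bool) list)
    \<Rightarrow> ('a raw \<times> 'a raw) set"
  for Ag Rs phi where
  "\<lbrakk>valid_word Ag w; valid_word Ag w'; weq Ag Rs phi w w'\<rbrakk> \<Longrightarrow> (RV w, RV w') \<in> xgen Ag Rs phi"
| "\<lbrakk>valid_word Ag w; valid_word Ag w'; weq Ag Rs phi w w'; x \<in> gens Ag; \<tau> \<in> {0..1}\<rbrakk>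
    \<Longrightarrow> (RE w x \<tau>, RE w' x \<tau>) \<in> xgen Ag Rs phi"
| "\<lbrakk>valid_word Ag w; valid_word Ag w'; weq Ag Rs phi w w'; c \<in> cells Ag Rs; z \<in> cball 0 1\<rbrakk>
    \<Longrightarrow> (RC w c z, RC w' c z) \<in> xgen Ag Rs phi"
| "\<lbrakk>valid_word Ag w; x \<in> gens Ag\<rbrakk> \<Longrightarrow> (RE w x 0, RV w) \<in> xgen Ag Rs phi"
| "\<lbrakk>valid_word Ag w; x \<in> gens Ag\<rbrakk> \<Longrightarrow> (RE w x 1, RV (w @ [(x, True)])) \<in> xgen Ag Rs phi"
| "\<lbrakk>valid_word Ag w; c \<in> cells Ag Rs; cmod z = 1\<rbrakk> \<Longrightarrow> (RC w c z, attach phi w c z) \<in> xgen Ag Rs phi"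

definition xeq :: "'a set \<Rightarrow> ('a \<times> bool) list set \<Rightarrow> ('a \<Rightarrow> ('a \<times> bool) list)
    \<Rightarrow> ('a raw \<times> 'a raw) set" where
  "xeq Ag Rs phi = (xgen Ag Rs phi \<union> (xgen Ag Rs phi)\<inverse>)\<^sup>*"

definition Xpts :: "'a set \<Rightarrow> ('a \<times> bool) list set \<Rightarrow> ('a \<Rightarrow> ('a \<times> bool) list) \<Rightarrow> 'a raw set set" where
  "Xpts Ag Rs phi = rawpts Ag Rs // xeq Ag Rs phi"

definition cls :: "'a set \<Rightarrow> ('a \<times> bool) list set \<Rightarrow> ('a \<Rightarrow> ('a \<times> bool) list) \<Rightarrow> 'a raw \<Rightarrow> 'a raw set" where
  "cls Ag Rs phi p = xeq Ag Rs phi `` {p}"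

text \<open>Disjoint-union topology on the raw points.\<close>
definition rawtop :: "'a set \<Rightarrow> ('a \<times> bool) list set \<Rightarrow> 'a raw topology" where
  "rawtop Ag Rs = topology (\<lambda>U. U \<subseteq> rawpts Ag Rs
     \<and> (\<forall>w x. openin (top_of_set {0..1::real}) {\<tau> \<in> {0..1}. RE w x \<tau> \<in> U})
     \<and> (\<forall>w c. openin (top_of_set (cball (0::complex) 1)) {z \<in> cball 0 1. RC w c z \<in> U}))"

definition cayley_complex :: "'a set \<Rightarrow> ('a \<times> bool) list set \<Rightarrow> ('a \<Rightarrow> ('a \<times> bool) list)
    \<Rightarrow> 'a raw set topology" where
  "cayley_complex Ag Rs phi = topology (\<lambda>U. U \<subseteq> Xpts Ag Rs phi \<and> openin (rawtop Ag Rs) (\<Union>U))"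

definition cellimg :: "'a set \<Rightarrow> ('a \<times> bool) list set \<Rightarrow> ('a \<Rightarrow> ('a \<times> bool) list)
    \<Rightarrow> 'a gword \<Rightarrow> 'a cell \<Rightarrow> 'a raw set set" where
  "cellimg Ag Rs phi w c = {cls Ag Rs phi (RC w c z) | z. z \<in> cball 0 1}"

text \<open>The k-th strip of the A-edge labelled a starting at the vertex represented by u:
  the conjugation 2-cells attached along the edges of the path reading phi^k(a) at u t^k
  (for a letter b^-1 the cell for b based at the endpoint of that edge); if phi^k(a) is
  trivial, the strip degenerates to the t-edge at u t^k.\<close>
definition strip :: "'a set \<Rightarrow> ('a \<times> bool) list set \<Rightarrow> ('a \<Rightarrow> ('a \<times> bool) list)
    \<Rightarrow> 'a gword \<Rightarrow> 'a \<Rightarrow> nat \<Rightarrow> 'a raw set set" where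
  "strip Ag Rs phi u a k =
     (let base = u @ replicate k (T, True); p = phipow phi k a in
      if p = [] then {cls Ag Rs phi (RE base T \<tau>) | \<tau>. \<tau> \<in> {0..1}}
      else (\<Union>i < length p.
              cellimg Ag Rs phi
                (base @ lift (take i p) @ (if snd (p ! i) then [] else [(A (fst (p ! i)), False)]))
                (RelC (fst (p ! i)))))"

definition H_image :: "'a set \<Rightarrow> ('a \<times> bool) list set \<Rightarrow> ('a \<Rightarrow> ('a \<times> bool) list)
    \<Rightarrow> 'a gword \<Rightarrow> 'a \<Rightarrow> 'a raw set set" where
  "H_image Ag Rs phi u a = (\<Union>k. strip Ag Rs phi u a k)"

text \<open>Edges of Lambda: A-labelled edges (v, a) whose initial vertex v lies in the subgroup
  generated by A, i.e. is represented by a word over A only.\<close>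
definition Lambda_edges :: "'a set \<Rightarrow> ('a \<times> bool) list set \<Rightarrow> ('a \<Rightarrow> ('a \<times> bool) list)
    \<Rightarrow> ('a raw set \<times> 'a) set" where
  "Lambda_edges Ag Rs phi = {(cls Ag Rs phi (RV u), a) | u a. set u \<subseteq> A ` Ag \<times> UNIV \<and> a \<in> Ag}"

definition H_image_edge :: "'a set \<Rightarrow> ('a \<times> bool) list set \<Rightarrow> ('a \<Rightarrow> ('a \<times> bool) list)
    \<Rightarrow> 'a raw set \<times> 'a \<Rightarrow> 'a raw set set" where
  "H_image_edge Ag Rs phi e =
     H_image Ag Rs phi (SOME u. valid_word Ag u \<and> cls Ag Rs phi (RV u) = fst e) (snd e)"

end

theory Submission
  imports Defs
begin

text \<open>Every point of X lies in a smallest closed cell, and the set of vertices of that cell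
  depends only on the point of X.  The points whose carrier cell contains a given vertex form an
  open set, the open star of the vertex; these stars cover X, so the compact set C lies in
  finitely many of them, and it suffices to consider the star of a single vertex v.

  If the k-th strip of the edge e at u with label a meets that star, then
  v = u t^k r, where r ranges over the finitely many words leading from u t^k to a vertex of one
  of the conjugation cells along phi^k(a); each such r has t-exponent between -2 and 2.
  Since u is a word in A, comparing t-exponent sums gives k \<le> t-exponent(v) + 2.
  So (a, k, r) ranges over a finite set, and it determines the vertex u = v r^-1 t^-k, hence e.\<close>

lemma winv_Nil [simp]: "winv [] = []"
  by (simp add: winv_def)

lemma winv_Cons: "winv (l # s) = winv s @ [linv l]"
  by (simp add: winv_def)

lemma set_winv: "set (winv w) = linv ` set w"
  by (simp add: winv_def)

lemma set_lift: "set (lift r) = (\<lambda>(a, b). (A a, b)) ` set r"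
  by (simp add: lift_def)

lemma weq_equivp: "equivp (weq Ag Rs phi)"
  by (intro equivpI reflpI sympI transpI) (blast intro: weq.intros)+

lemma weq_append_right: "weq Ag Rs phi u v \<Longrightarrow> weq Ag Rs phi (u @ s) (v @ s)"
proof (induction rule: weq.induct)
  case (weq_cancel l u v)
  then show ?case using weq.weq_cancel[of l Ag Rs phi u "v @ s"] by simp
next
  case (weq_rel c u v)
  then show ?case using weq.weq_rel[of c Ag Rs phi u "v @ s"] by simp
qed (auto intro: weq.intros)

lemma weq_append_winv:
  "set s \<subseteq> gens Ag \<times> UNIV \<Longrightarrow> weq Ag Rs phi (u @ s @ winv s) u"
proof (induction s arbitrary: u)
  case Nil
  then show ?case by (simp add: weq_refl)
next
  case (Cons l s)
  have l: "l \<in> gens Ag \<times> UNIV" using Cons.prems by auto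
  have "weq Ag Rs phi ((u @ [l]) @ s @ winv s) (u @ [l])"
    using Cons.IH[of "u @ [l]"] Cons.prems by simp
  then have "weq Ag Rs phi (((u @ [l]) @ s @ winv s) @ [linv l]) ((u @ [l]) @ [linv l])"
    by (rule weq_append_right)
  moreover have "weq Ag Rs phi (u @ [l, linv l] @ []) (u @ [])"
    using l by (rule weq_cancel)
  ultimately show ?case
    by (auto simp: winv_Cons intro: weq_trans)
qed

lemma weq_right_cancel:
  assumes "set s \<subseteq> gens Ag \<times> UNIV" "weq Ag Rs phi (u @ s) (v @ s)"
  shows "weq Ag Rs phi u v"
proof -
  have "weq Ag Rs phi (u @ s @ winv s) (v @ s @ winv s)"
    using weq_append_right[OF assms(2), of "winv s"] by simp
  then show ?thesis
    using weq_append_winv[OF assms(1), of Rs phi] by (meson weq_sym weq_trans)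
qed

definition group_elem :: "'a set \<Rightarrow> ('a \<times> bool) list set \<Rightarrow> ('a \<Rightarrow> ('a \<times> bool) list)
    \<Rightarrow> 'a gword \<Rightarrow> 'a gword set" where
  "group_elem Ag Rs phi w = Collect (weq Ag Rs phi w)"

lemma group_elem_eq_iff:
  "group_elem Ag Rs phi u = group_elem Ag Rs phi v \<longleftrightarrow> weq Ag Rs phi u v"
  unfolding group_elem_def using weq_equivp[of Ag Rs phi] by (metis Collect_inj equivp_def)

lemma group_elem_append_right:
  "weq Ag Rs phi u v \<Longrightarrow> group_elem Ag Rs phi (u @ s) = group_elem Ag Rs phi (v @ s)"
  by (simp add: group_elem_eq_iff weq_append_right)

definition t_exponent :: "'a gword \<Rightarrow> int" where
  "t_exponent w = (\<Sum>l\<leftarrow>w. if fst l = T then (if snd l then 1 else -1) else 0)"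

lemma t_exponent_Nil [simp]: "t_exponent [] = 0"
  and t_exponent_Cons [simp]:
    "t_exponent (l # w) = (if fst l = T then (if snd l then 1 else -1) else 0) + t_exponent w"
  and t_exponent_append [simp]: "t_exponent (u @ w) = t_exponent u + t_exponent w"
  by (simp_all add: t_exponent_def)

lemma t_exponent_lift [simp]: "t_exponent (lift r) = 0"
  by (induction r) (auto simp: lift_def)

lemma t_exponent_winv [simp]: "t_exponent (winv w) = - t_exponent w"
  by (induction w) (auto simp: winv_Cons linv_def)

lemma t_exponent_replicate_T [simp]: "t_exponent (replicate k (T, True)) = int k"
  by (induction k) auto

lemma t_exponent_eq_0_if_no_T: "set u \<subseteq> A ` Ag \<times> UNIV \<Longrightarrow> t_exponent u = 0"
  by (induction u) auto

lemma weq_t_exponent: "weq Ag Rs phi u v \<Longrightarrow> t_exponent u = t_exponent v"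
proof (induction rule: weq.induct)
  case (weq_rel c u v)
  then show ?case by (cases c) auto
qed (auto simp: linv_def)

definition t_count :: "'a gword \<Rightarrow> nat" where
  "t_count w = length (filter (\<lambda>l. fst l = T) w)"

lemma t_count_Nil [simp]: "t_count [] = 0"
  and t_count_Cons [simp]: "t_count (l # w) = (if fst l = T then 1 else 0) + t_count w"
  and t_count_append [simp]: "t_count (u @ w) = t_count u + t_count w"
  by (simp_all add: t_count_def)

lemma t_count_lift [simp]: "t_count (lift r) = 0"
  by (induction r) (auto simp: lift_def)

lemma t_count_winv [simp]: "t_count (winv w) = t_count w"
  unfolding t_count_def winv_def by (simp add: rev_filter[symmetric] filter_map o_def linv_def)

lemma abs_t_exponent_take_le: "\<bar>t_exponent (take j w)\<bar> \<le> int (t_count w)"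
proof (induction w arbitrary: j)
  case (Cons l w)
  show ?case
  proof (cases j)
    case (Suc i)
    then show ?thesis using Cons.IH[of i] by auto
  qed simp
qed simp

section \<open>Vertices of the carrier cell of a point\<close>

definition skeleton_vertices :: "'a set \<Rightarrow> ('a \<times> bool) list set \<Rightarrow> ('a \<Rightarrow> ('a \<times> bool) list)
    \<Rightarrow> 'a raw \<Rightarrow> 'a gword set set" where
  "skeleton_vertices Ag Rs phi p = (case p of
       RV w \<Rightarrow> {group_elem Ag Rs phi w}
     | RE w x \<tau> \<Rightarrow>
         (if \<tau> = 0 then {group_elem Ag Rs phi w}
          else if \<tau> = 1 then {group_elem Ag Rs phi (w @ [(x, True)])}
          else {group_elem Ag Rs phi w, group_elem Ag Rs phi (w @ [(x, True)])})
     | RC w c z \<Rightarrow> {})"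

definition carrier_vertices :: "'a set \<Rightarrow> ('a \<times> bool) list set \<Rightarrow> ('a \<Rightarrow> ('a \<times> bool) list)
    \<Rightarrow> 'a raw \<Rightarrow> 'a gword set set" where
  "carrier_vertices Ag Rs phi p = (case p of
       RC w c z \<Rightarrow>
         (if cmod z = 1 then skeleton_vertices Ag Rs phi (attach phi w c z)
          else {group_elem Ag Rs phi (w @ take j (bword phi c)) | j. j \<le> length (bword phi c)})
     | _ \<Rightarrow> skeleton_vertices Ag Rs phi p)"

text \<open>The position of a boundary point z of a 2-cell with n boundary edges, measured in edges,
  as in the definition of attach.\<close>
definition arc_pos :: "nat \<Rightarrow> complex \<Rightarrow> real" where
  "arc_pos n z = real n * (Arg2pi z / (2 * pi))"

lemma arc_pos_1 [simp]: "arc_pos n 1 = 0"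
  using Arg2pi_of_real[of 1] by (simp add: arc_pos_def)

lemma arc_pos_nonneg: "0 \<le> arc_pos n z"
  using Arg2pi_ge_0[of z] by (simp add: arc_pos_def)

lemma arc_pos_less: "n > 0 \<Longrightarrow> arc_pos n z < real n"
  using Arg2pi_lt_2pi[of z] by (simp add: arc_pos_def field_simps)

lemma attach_unfold:
  fixes z :: complex and p x j
  assumes "bword phi c \<noteq> []"
  defines "p \<equiv> bword phi c" and "x \<equiv> arc_pos (length (bword phi c)) z" and "j \<equiv> nat \<lfloor>x\<rfloor>"
  shows "j < length p" "real j \<le> x" "x < real j + 1"
    "attach phi w c z = (if snd (p ! j) then RE (w @ take j p) (fst (p ! j)) (x - real j)
        else RE (w @ take j p @ [p ! j]) (fst (p ! j)) (1 - (x - real j)))"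
proof -
  have "real j = of_int \<lfloor>x\<rfloor>"
    unfolding j_def using arc_pos_nonneg[of _ z] x_def by simp
  then show "real j \<le> x" "x < real j + 1" by linarith+
  then show "j < length p"
    using arc_pos_less[of "length p" z] assms(1) unfolding p_def x_def by simp
  show "attach phi w c z = (if snd (p ! j) then RE (w @ take j p) (fst (p ! j)) (x - real j)
      else RE (w @ take j p @ [p ! j]) (fst (p ! j)) (1 - (x - real j)))"
    using assms(1) unfolding attach_def Let_def p_def x_def j_def arc_pos_def by simp
qed

lemma skeleton_vertices_attach:
  fixes z :: complex and p x j
  assumes "bword phi c \<noteq> []" and valid: "set (bword phi c) \<subseteq> gens Ag \<times> UNIV"
  defines "p \<equiv> bword phi c" and "x \<equiv> arc_pos (length (bword phi c)) z" and "j \<equiv> nat \<lfloor>x\<rfloor>"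
  shows "skeleton_vertices Ag Rs phi (attach phi w c z) =
    (if x = real j then {group_elem Ag Rs phi (w @ take j p)}
     else {group_elem Ag Rs phi (w @ take j p), group_elem Ag Rs phi (w @ take (Suc j) p)})"
proof -
  note au = attach_unfold(1-3)[where z=z, OF assms(1), folded x_def, folded j_def, folded p_def]
    attach_unfold(4)[where z=z and w=w, OF assms(1), folded x_def, folded j_def, folded p_def]
  have take_Suc: "take (Suc j) p = take j p @ [p ! j]"
    using au(1) by (simp add: take_Suc_conv_app_nth)
  obtain y b where pj: "p ! j = (y, b)" by fastforce
  show ?thesis
  proof (cases b)
    case True
    then show ?thesis using au pj take_Suc by (simp add: skeleton_vertices_def)
  next
    case False
    have "p ! j \<in> gens Ag \<times> UNIV" using valid au(1) unfolding p_def by (meson nth_mem subsetD)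
    then have "weq Ag Rs phi ((w @ take j p) @ [p ! j, linv (p ! j)] @ []) ((w @ take j p) @ [])"
      by (rule weq_cancel)
    then have retract: "group_elem Ag Rs phi (w @ take (Suc j) p @ [(y, True)]) =
        group_elem Ag Rs phi (w @ take j p)"
      using take_Suc pj False by (simp add: group_elem_eq_iff linv_def)
    have "1 - (x - real j) \<noteq> 0" using au by linarith
    moreover have "x \<noteq> real j \<Longrightarrow> 1 - (x - real j) \<noteq> 1" by simp
    ultimately show ?thesis using au pj False take_Suc retract
      by (auto simp: skeleton_vertices_def)
  qed
qed

lemma skeleton_vertices_attach_iff:
  assumes valid: "set (bword phi c) \<subseteq> gens Ag \<times> UNIV"
  defines "p \<equiv> bword phi c"
  shows "g \<in> skeleton_vertices Ag Rs phi (attach phi w c z) \<longleftrightarrow>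
    (\<exists>i \<le> length p. group_elem Ag Rs phi (w @ take i p) = g
       \<and> \<bar>arc_pos (length p) z - real i\<bar> < 1)"
proof (cases "p = []")
  case True
  then show ?thesis
    unfolding p_def by (auto simp: attach_def skeleton_vertices_def arc_pos_def)
next
  case False
  define x where "x = arc_pos (length p) z"
  define j where "j = nat \<lfloor>x\<rfloor>"
  note au = attach_unfold(1-3)[where z=z, OF False[unfolded p_def], folded p_def, folded x_def,
    folded j_def]
  have "\<bar>x - real i\<bar> < 1 \<longleftrightarrow> i = j \<or> (x \<noteq> real j \<and> i = Suc j)" for i
    using au by linarith
  then have "(\<exists>i \<le> length p. group_elem Ag Rs phi (w @ take i p) = g \<and> \<bar>x - real i\<bar> < 1) \<longleftrightarrow>
      g = group_elem Ag Rs phi (w @ take j p)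
      \<or> (x \<noteq> real j \<and> g = group_elem Ag Rs phi (w @ take (Suc j) p))"
    using au(1) by (auto intro: exI[of _ j] exI[of _ "Suc j"])
  then show ?thesis
    using skeleton_vertices_attach[where Rs=Rs and z=z and w=w, OF False[unfolded p_def] valid,
        folded x_def[unfolded p_def], folded j_def, folded p_def]
    unfolding x_def by auto
qed

lemma carrier_vertices_attach:
  "carrier_vertices Ag Rs phi (attach phi w c z) = skeleton_vertices Ag Rs phi (attach phi w c z)"
  by (auto simp: attach_def Let_def carrier_vertices_def)

lemma rawpts_simps [simp]:
  "RV w \<in> rawpts Ag Rs \<longleftrightarrow> valid_word Ag w"
  "RE w x \<tau> \<in> rawpts Ag Rs \<longleftrightarrow> valid_word Ag w \<and> x \<in> gens Ag \<and> \<tau> \<in> {0..1}"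
  "RC w c z \<in> rawpts Ag Rs \<longleftrightarrow> valid_word Ag w \<and> c \<in> cells Ag Rs \<and> z \<in> cball 0 1"
  by (auto simp: rawpts_def)

lemma equiv_xeq: "equiv UNIV (xeq Ag Rs phi)"
  unfolding xeq_def equiv_def
  by (simp add: refl_rtrancl trans_rtrancl sym_rtrancl sym_Un_converse)

lemma cls_eq: "(p, q) \<in> xeq Ag Rs phi \<Longrightarrow> cls Ag Rs phi p = cls Ag Rs phi q"
  unfolding cls_def by (rule equiv_class_eq[OF equiv_xeq])

lemma mem_cls_self: "p \<in> cls Ag Rs phi p"
  unfolding cls_def by (rule equiv_class_self[OF equiv_xeq]) simp

lemma disjoint_Xpts: "disjoint (Xpts Ag Rs phi)"
proof (rule pairwiseI)
  fix X Y assume "X \<in> Xpts Ag Rs phi" "Y \<in> Xpts Ag Rs phi" "X \<noteq> Y"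
  then have "X \<in> UNIV // xeq Ag Rs phi" "Y \<in> UNIV // xeq Ag Rs phi"
    unfolding Xpts_def quotient_def by auto
  then show "disjnt X Y" using quotient_disj[OF equiv_xeq] \<open>X \<noteq> Y\<close> unfolding disjnt_def by blast
qed

locale presentation =
  fixes Ag :: "'a set" and Rs :: "('a \<times> bool) list set" and phi :: "'a \<Rightarrow> ('a \<times> bool) list"
  assumes relators_over_Ag: "\<forall>r \<in> Rs. set r \<subseteq> Ag \<times> UNIV"
    and images_over_Ag: "\<forall>a \<in> Ag. set (phi a) \<subseteq> Ag \<times> UNIV"
begin

lemma set_bword_subset: "c \<in> cells Ag Rs \<Longrightarrow> set (bword phi c) \<subseteq> gens Ag \<times> UNIV"
  using relators_over_Ag images_over_Ag unfolding cells_def gens_def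
  by (auto simp: set_lift set_winv linv_def) blast+

lemma carrier_vertices_xgen:
  assumes "(p, q) \<in> xgen Ag Rs phi"
  shows "carrier_vertices Ag Rs phi p = carrier_vertices Ag Rs phi q"
  using assms
proof cases
  case (2 w w' x \<tau>)
  then have "group_elem Ag Rs phi w = group_elem Ag Rs phi w'"
    "group_elem Ag Rs phi (w @ [(x, True)]) = group_elem Ag Rs phi (w' @ [(x, True)])"
    by (simp_all add: group_elem_eq_iff weq_append_right)
  then show ?thesis using 2 by (simp add: carrier_vertices_def skeleton_vertices_def)
next
  case (3 w w' c z)
  have "\<And>s. group_elem Ag Rs phi (w @ s) = group_elem Ag Rs phi (w' @ s)"
    using \<open>weq Ag Rs phi w w'\<close> by (rule group_elem_append_right)
  then show ?thesis using 3
    by (simp add: carrier_vertices_def set_eq_iff skeleton_vertices_attach_iff[OF set_bword_subset])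
next
  case (6 w c z)
  then show ?thesis by (simp add: carrier_vertices_attach, simp add: carrier_vertices_def)
qed (auto simp: carrier_vertices_def skeleton_vertices_def group_elem_eq_iff weq_append_right)

lemma carrier_vertices_xeq:
  assumes "(p, q) \<in> xeq Ag Rs phi"
  shows "carrier_vertices Ag Rs phi p = carrier_vertices Ag Rs phi q"
  using assms unfolding xeq_def
  by (induction rule: rtrancl_induct) (auto dest: carrier_vertices_xgen)

lemma attach_in_rawpts:
  assumes "valid_word Ag w" "c \<in> cells Ag Rs"
  shows "attach phi w c z \<in> rawpts Ag Rs"
proof (cases "bword phi c = []")
  case True
  then show ?thesis using assms by (simp add: attach_def)
next
  case False
  define p where "p = bword phi c"
  define j where "j = nat \<lfloor>arc_pos (length (bword phi c)) z\<rfloor>"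
  note au = attach_unfold(1-3)[where z=z, OF False, folded j_def, folded p_def]
    attach_unfold(4)[where z=z and w=w, OF False, folded j_def, folded p_def]
  have "set p \<subseteq> gens Ag \<times> UNIV" using set_bword_subset[OF assms(2)] p_def by simp
  then have "set (take j p) \<subseteq> gens Ag \<times> UNIV" "p ! j \<in> gens Ag \<times> UNIV"
    using au(1) by (auto dest: in_set_takeD)
  then show ?thesis using assms(1) au by (auto simp: valid_word_def)
qed

lemma xgen_rawpts:
  assumes "(p, q) \<in> xgen Ag Rs phi"
  shows "p \<in> rawpts Ag Rs \<and> q \<in> rawpts Ag Rs"
  using assms
  by cases (auto simp: valid_word_def attach_in_rawpts)

lemma xeq_rawpts:
  assumes "(p, q) \<in> xeq Ag Rs phi" "p \<in> rawpts Ag Rs"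
  shows "q \<in> rawpts Ag Rs"
  using assms unfolding xeq_def
  by (induction rule: rtrancl_induct) (auto dest: xgen_rawpts)

lemma Union_Xpts_subset: "\<Union>(Xpts Ag Rs phi) \<subseteq> rawpts Ag Rs"
  unfolding Xpts_def quotient_def using xeq_rawpts by auto

end

section \<open>Open stars of vertices\<close>

lemma istopology_subset: "istopology (\<lambda>U. U \<subseteq> S)"
  by (auto simp: istopology_def)

lemma istopology_conj: "istopology P \<Longrightarrow> istopology Q \<Longrightarrow> istopology (\<lambda>U. P U \<and> Q U)"
  by (auto simp: istopology_def)

lemma istopology_all: "(\<And>i. istopology (P i)) \<Longrightarrow> istopology (\<lambda>U. \<forall>i. P i U)"
  by (auto simp: istopology_def)

lemma istopology_preimage: "istopology (\<lambda>U. openin (top_of_set S) {x \<in> S. f x \<in> U})"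
proof -
  have "{x \<in> S. f x \<in> U \<inter> V} = {x \<in> S. f x \<in> U} \<inter> {x \<in> S. f x \<in> V}"
    "{x \<in> S. f x \<in> \<Union>K} = (\<Union>U\<in>K. {x \<in> S. f x \<in> U})" for U V K
    by auto
  then show ?thesis by (auto simp: istopology_def)
qed

lemma Union_Int_disjoint:
  assumes "disjoint P" "S \<subseteq> P" "V \<subseteq> P"
  shows "\<Union>(S \<inter> V) = \<Union>S \<inter> \<Union>V"
proof
  show "\<Union>S \<inter> \<Union>V \<subseteq> \<Union>(S \<inter> V)"
  proof
    fix x assume "x \<in> \<Union>S \<inter> \<Union>V"
    then obtain X Y where "X \<in> S" "Y \<in> V" "x \<in> X" "x \<in> Y" by blast
    then have "X = Y" using assms unfolding pairwise_def disjnt_def by blast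
    then show "x \<in> \<Union>(S \<inter> V)" using \<open>X \<in> S\<close> \<open>Y \<in> V\<close> \<open>x \<in> X\<close> by blast
  qed
qed blast

lemma istopology_Union_disjoint:
  assumes "disjoint P"
  shows "istopology (\<lambda>U. U \<subseteq> P \<and> openin X (\<Union>U))"
proof -
  have "\<Union>(\<Union>K) = \<Union>(Union ` K)" for K :: "'a set set set" by blast
  then show ?thesis by (auto simp: istopology_def Union_Int_disjoint[OF assms])
qed

lemma openin_rawtop: "openin (rawtop Ag Rs) U \<longleftrightarrow> U \<subseteq> rawpts Ag Rs
     \<and> (\<forall>w x. openin (top_of_set {0..1::real}) {\<tau> \<in> {0..1}. RE w x \<tau> \<in> U})
     \<and> (\<forall>w c. openin (top_of_set (cball (0::complex) 1)) {z \<in> cball 0 1. RC w c z \<in> U})"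
proof -
  have "istopology (\<lambda>U. U \<subseteq> rawpts Ag Rs
     \<and> (\<forall>w x. openin (top_of_set {0..1::real}) {\<tau> \<in> {0..1}. RE w x \<tau> \<in> U})
     \<and> (\<forall>w c. openin (top_of_set (cball (0::complex) 1)) {z \<in> cball 0 1. RC w c z \<in> U}))"
    by (rule istopology_conj[OF istopology_subset istopology_conj];
        (rule istopology_all)+; rule istopology_preimage)
  then show ?thesis unfolding rawtop_def by simp
qed

lemma openin_cayley_complex:
  "openin (cayley_complex Ag Rs phi) U \<longleftrightarrow> U \<subseteq> Xpts Ag Rs phi \<and> openin (rawtop Ag Rs) (\<Union>U)"
  unfolding cayley_complex_def
  by (simp add: istopology_Union_disjoint[OF disjoint_Xpts])

lemma arc_pos_near:
  assumes "z \<notin> \<real>\<^sub>\<ge>\<^sub>0" "e > 0"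
  obtains d where "d > 0" "\<And>y. dist y z < d \<Longrightarrow> \<bar>arc_pos n y - arc_pos n z\<bar> < e"
proof -
  have "continuous (at z) (arc_pos n)"
    unfolding arc_pos_def[abs_def] using continuous_at_Arg2pi[OF assms(1)]
    by (auto intro!: continuous_intros)
  then show ?thesis using assms(2) that unfolding continuous_at_eps_delta dist_real_def by blast
qed

text \<open>Arg2pi jumps at 1, but only from near 2 pi to near 0, i.e. between the first and the
  last arc of the boundary.\<close>
lemma arc_pos_near_1:
  assumes "n > 0"
  obtains d where "d > 0" "\<And>y. dist y 1 < d \<Longrightarrow> arc_pos n y < 1 \<or> real n - 1 < arc_pos n y"
proof -
  have "(-1 :: complex) \<notin> \<real>\<^sub>\<ge>\<^sub>0" by (simp add: complex_nonneg_Reals_iff)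
  moreover have "Arg2pi (-1) = pi" using Arg2pi_of_real[of "-1"] by simp
  ultimately obtain d where d: "d > 0" "\<And>y. dist y (-1) < d \<Longrightarrow> \<bar>Arg2pi y - pi\<bar> < 2 * pi / n"
    using continuous_at_Arg2pi assms unfolding continuous_at_eps_delta dist_real_def
    by (metis divide_pos_pos of_nat_0_less_iff pi_gt_zero zero_less_numeral mult_pos_pos)
  show ?thesis
  proof (rule that[of "min d 1"])
    fix y :: complex assume y: "dist y 1 < min d 1"
    then have "y \<noteq> 0" by auto
    have "dist (- y) (-1) < d" using y by (simp add: dist_minus)
    then have near: "\<bar>Arg2pi (- y) - pi\<bar> < 2 * pi / n" by (rule d(2))
    have "Arg2pi y = (if Arg2pi (- y) < pi then Arg2pi (- y) + pi else Arg2pi (- y) - pi)"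
      using Arg2pi_minus[of "- y"] \<open>y \<noteq> 0\<close> by simp
    then have "Arg2pi y < 2 * pi / n \<or> 2 * pi - 2 * pi / n < Arg2pi y"
      using near by (auto split: if_splits)
    then show "arc_pos n y < 1 \<or> real n - 1 < arc_pos n y"
      using assms by (auto simp: arc_pos_def field_simps)
  qed (use d in simp)
qed

context presentation
begin

lemma carrier_vertices_cell_subset:
  assumes "c \<in> cells Ag Rs"
  shows "carrier_vertices Ag Rs phi (RC w c z)
    \<subseteq> {group_elem Ag Rs phi (w @ take j (bword phi c)) | j. j \<le> length (bword phi c)}"
  by (auto simp: carrier_vertices_def skeleton_vertices_attach_iff[OF set_bword_subset[OF assms]])

lemma skeleton_vertices_attach_1:
  assumes "c \<in> cells Ag Rs"
  shows "skeleton_vertices Ag Rs phi (attach phi w c 1) = {group_elem Ag Rs phi w}"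
proof -
  have "\<bar>real i\<bar> < 1 \<longleftrightarrow> i = 0" for i :: nat by linarith
  then show ?thesis
    by (auto simp: set_eq_iff skeleton_vertices_attach_iff[OF set_bword_subset[OF assms]])
qed

text \<open>Near 1 the boundary point lies on the first or on the last edge of the cell; both
  contain the base vertex, since the boundary word is a relator.\<close>
lemma base_vertex_near_attach_1:
  assumes c: "c \<in> cells Ag Rs"
  obtains e where "e > 0"
    "\<And>y. dist y 1 < e \<Longrightarrow> group_elem Ag Rs phi w \<in> skeleton_vertices Ag Rs phi (attach phi w c y)"
proof -
  define p where "p = bword phi c"
  define n where "n = length p"
  have mem: "group_elem Ag Rs phi w \<in> skeleton_vertices Ag Rs phi (attach phi w c y) \<longleftrightarrow>
      (\<exists>i \<le> n. group_elem Ag Rs phi (w @ take i p) = group_elem Ag Rs phi w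
        \<and> \<bar>arc_pos n y - real i\<bar> < 1)" for y :: complex
    unfolding skeleton_vertices_attach_iff[OF set_bword_subset[OF c]] p_def n_def ..
  have "weq Ag Rs phi (w @ bword phi c @ []) (w @ [])" using c by (rule weq_rel)
  then have last: "group_elem Ag Rs phi (w @ take n p) = group_elem Ag Rs phi w"
    by (simp add: p_def n_def group_elem_eq_iff)
  show ?thesis
  proof (cases "n = 0")
    case True
    show ?thesis
    proof (rule that[of 1])
      fix y :: complex
      show "group_elem Ag Rs phi w \<in> skeleton_vertices Ag Rs phi (attach phi w c y)"
        using mem[of y] True by (simp add: arc_pos_def)
    qed simp
  next
    case False
    obtain d where d: "d > 0" "\<And>y. dist y 1 < d \<Longrightarrow> arc_pos n y < 1 \<or> real n - 1 < arc_pos n y"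
      using arc_pos_near_1 False by blast
    show ?thesis
    proof (rule that[OF d(1)])
      fix y :: complex assume "dist y 1 < d"
      then have "\<bar>arc_pos n y - real 0\<bar> < 1 \<or> \<bar>arc_pos n y - real n\<bar> < 1"
        using d(2)[of y] arc_pos_nonneg[of n y] arc_pos_less[of n y] False by auto
      then show "group_elem Ag Rs phi w \<in> skeleton_vertices Ag Rs phi (attach phi w c y)"
        using mem last by (metis le0 order_refl take_0 append_Nil2)
    qed
  qed
qed

lemma attach_vertex_persists:
  assumes c: "c \<in> cells Ag Rs" and "cmod z = 1"
    and g: "g \<in> skeleton_vertices Ag Rs phi (attach phi w c z)"
  obtains e where "e > 0" "\<And>y. dist y z < e \<Longrightarrow> g \<in> skeleton_vertices Ag Rs phi (attach phi w c y)"
proof (cases "z \<in> \<real>\<^sub>\<ge>\<^sub>0")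
  case True
  then have "z = 1"
    using \<open>cmod z = 1\<close> by (simp add: complex_eq_iff complex_nonneg_Reals_iff cmod_eq_Re)
  then have "g = group_elem Ag Rs phi w" using g skeleton_vertices_attach_1[OF c] by simp
  then show ?thesis using base_vertex_near_attach_1[OF c] that \<open>z = 1\<close> by metis
next
  case False
  define n where "n = length (bword phi c)"
  have mem: "g \<in> skeleton_vertices Ag Rs phi (attach phi w c y) \<longleftrightarrow>
      (\<exists>i \<le> n. group_elem Ag Rs phi (w @ take i (bword phi c)) = g
        \<and> \<bar>arc_pos n y - real i\<bar> < 1)" for y :: complex
    unfolding skeleton_vertices_attach_iff[OF set_bword_subset[OF c]] n_def ..
  obtain i where i: "i \<le> n" "group_elem Ag Rs phi (w @ take i (bword phi c)) = g"
    "\<bar>arc_pos n z - real i\<bar> < 1"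
    using g mem by blast
  obtain d where d: "d > 0"
    "\<And>y. dist y z < d \<Longrightarrow> \<bar>arc_pos n y - arc_pos n z\<bar> < 1 - \<bar>arc_pos n z - real i\<bar>"
    using arc_pos_near[OF False] i(3) by (metis diff_gt_0_iff_gt)
  show ?thesis
  proof (rule that[OF d(1)])
    fix y assume "dist y z < d"
    then have "\<bar>arc_pos n y - real i\<bar> < 1" using d(2) by fastforce
    then show "g \<in> skeleton_vertices Ag Rs phi (attach phi w c y)" using mem i by blast
  qed
qed

lemma openin_cell_star:
  assumes c: "c \<in> cells Ag Rs"
  shows "openin (top_of_set (cball 0 1)) {z \<in> cball 0 1. g \<in> carrier_vertices Ag Rs phi (RC w c z)}"
  unfolding openin_euclidean_subtopology_iff
proof (intro conjI ballI)
  fix z assume z: "z \<in> {z \<in> cball 0 1. g \<in> carrier_vertices Ag Rs phi (RC w c z)}"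
  have interior: "g \<in> carrier_vertices Ag Rs phi (RC w c y)" if "cmod y < 1" for y
    using carrier_vertices_cell_subset[OF c, of w z] z that by (auto simp: carrier_vertices_def)
  show "\<exists>e>0. \<forall>y\<in>cball 0 1. dist y z < e \<longrightarrow>
      y \<in> {z \<in> cball 0 1. g \<in> carrier_vertices Ag Rs phi (RC w c z)}"
  proof (cases "cmod z = 1")
    case True
    then obtain e where e: "e > 0" "\<And>y. dist y z < e \<Longrightarrow> g \<in> skeleton_vertices Ag Rs phi (attach phi w c y)"
      using attach_vertex_persists[OF c True, of g] z by (auto simp: carrier_vertices_def)
    show ?thesis
    proof (intro exI[of _ e] conjI ballI impI)
      fix y assume y: "y \<in> cball 0 1" "dist y z < e"
      show "y \<in> {z \<in> cball 0 1. g \<in> carrier_vertices Ag Rs phi (RC w c z)}"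
      proof (cases "cmod y = 1")
        case True
        with y e show ?thesis by (simp add: carrier_vertices_def)
      next
        case False
        with y interior show ?thesis by simp
      qed
    qed (fact \<open>e > 0\<close>)
  next
    case False
    then have "cmod z < 1" using z by simp
    moreover have "cmod y < 1" if "dist y z < 1 - cmod z" for y
      using norm_triangle_ineq[of z "y - z"] that by (simp add: dist_norm)
    ultimately show ?thesis using interior by (intro exI[of _ "1 - cmod z"]) auto
  qed
qed auto

lemma openin_rawtop_star: "openin (rawtop Ag Rs) {p \<in> rawpts Ag Rs. g \<in> carrier_vertices Ag Rs phi p}"
  unfolding openin_rawtop
proof (intro conjI allI)
  fix w x
  define S where "S = (if g = group_elem Ag Rs phi w then {..<1} else {})
    \<union> (if g = group_elem Ag Rs phi (w @ [(x, True)]) then {0<..} else ({}::real set))"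
  have "{\<tau> \<in> {0..1}. RE w x \<tau> \<in> {p \<in> rawpts Ag Rs. g \<in> carrier_vertices Ag Rs phi p}}
    = (if valid_word Ag w \<and> x \<in> gens Ag then {0..1} \<inter> S else {})"
    unfolding S_def by (auto simp: carrier_vertices_def skeleton_vertices_def)
  moreover have "open S" unfolding S_def by auto
  ultimately show "openin (top_of_set {0..1::real})
      {\<tau> \<in> {0..1}. RE w x \<tau> \<in> {p \<in> rawpts Ag Rs. g \<in> carrier_vertices Ag Rs phi p}}"
    by (simp add: openin_open_Int)
next
  fix w c
  show "openin (top_of_set (cball (0::complex) 1))
      {z \<in> cball 0 1. RC w c z \<in> {p \<in> rawpts Ag Rs. g \<in> carrier_vertices Ag Rs phi p}}"
  proof (cases "valid_word Ag w \<and> c \<in> cells Ag Rs")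
    case True
    then show ?thesis using openin_cell_star[of c g w] by simp
  next
    case False
    then have "{z \<in> cball 0 1. RC w c z \<in> {p \<in> rawpts Ag Rs. g \<in> carrier_vertices Ag Rs phi p}} = {}"
      by auto
    then show ?thesis by (simp only: openin_empty)
  qed
qed auto

end

section \<open>Vertices of strips\<close>

lemma set_red_step_subset: "set (red_step l r) \<subseteq> insert l (set r)"
  by (cases r) auto

lemma set_reduce_subset: "set (reduce w) \<subseteq> set w"
  unfolding reduce_def
  by (induction w) (use set_red_step_subset in fastforce)+

lemma (in presentation) set_phipow_subset: "a \<in> Ag \<Longrightarrow> set (phipow phi k a) \<subseteq> Ag \<times> UNIV"
proof (induction k)
  case (Suc k)
  have "set (phil phi l) \<subseteq> Ag \<times> UNIV" if "l \<in> set (phipow phi k a)" for l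
  proof -
    have "fst l \<in> Ag" using that Suc by auto
    then have "set (phi (fst l)) \<subseteq> Ag \<times> UNIV" using images_over_Ag by blast
    then show ?thesis by (auto simp: phil_def set_winv linv_def subset_iff)
  qed
  then show ?case using set_reduce_subset by fastforce
qed simp

text \<open>The words u t^k r with r in this set are the vertices of the k-th strip of the edge at u
  labelled a; the i-th part collects the vertices of the conjugation cell along the i-th letter
  of phi^k(a).\<close>
definition strip_offsets :: "('a \<Rightarrow> ('a \<times> bool) list) \<Rightarrow> 'a \<Rightarrow> nat \<Rightarrow> 'a gword set" where
  "strip_offsets phi a k = {[], [(T, True)]} \<union>
     (\<Union>i\<in>{..<length (phipow phi k a)}. \<Union>ext\<in>{[], [(A (fst (phipow phi k a ! i)), False)]}.
        (\<lambda>j. lift (take i (phipow phi k a)) @ ext @ take j (bword phi (RelC (fst (phipow phi k a ! i)))))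
          ` {..length (bword phi (RelC (fst (phipow phi k a ! i))))})"

lemma finite_strip_offsets: "finite (strip_offsets phi a k)"
  unfolding strip_offsets_def by auto

lemma abs_t_exponent_strip_offset:
  assumes "r \<in> strip_offsets phi a k"
  shows "\<bar>t_exponent r\<bar> \<le> 2"
proof -
  have "\<bar>t_exponent (take j (bword phi (RelC b)))\<bar> \<le> 2" for j b
    using abs_t_exponent_take_le[of j "bword phi (RelC b)"] by simp
  then show ?thesis using assms unfolding strip_offsets_def by (auto simp: lift_def[symmetric])
qed

context presentation
begin

lemma set_strip_offset_subset:
  assumes a: "a \<in> Ag" and r: "r \<in> strip_offsets phi a k"
  shows "set r \<subseteq> gens Ag \<times> UNIV"
proof -
  define P where "P = phipow phi k a"
  have letter: "fst (P ! i) \<in> Ag" if "i < length P" for i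
    using set_phipow_subset[OF a, of k] nth_mem[OF that] unfolding P_def by force
  have prefix: "set (lift (take i P)) \<subseteq> gens Ag \<times> UNIV" for i
    using set_phipow_subset[OF a, of k] set_take_subset[of i P]
    unfolding P_def by (fastforce simp: set_lift gens_def)
  from r consider "r \<in> {[], [(T, True)]}"
    | i ext j where "i < length P" "ext \<in> {[], [(A (fst (P ! i)), False)]}"
        "r = lift (take i P) @ ext @ take j (bword phi (RelC (fst (P ! i))))"
    unfolding strip_offsets_def P_def[symmetric] by blast
  then show ?thesis
  proof cases
    case 1
    then show ?thesis by (auto simp: gens_def)
  next
    case (2 i ext j)
    have cell: "set (bword phi (RelC (fst (P ! i)))) \<subseteq> gens Ag \<times> UNIV"
      using set_bword_subset[of "RelC (fst (P ! i))"] letter[OF 2(1)] by (simp add: cells_def)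
    have "set ext \<subseteq> gens Ag \<times> UNIV" using 2(2) letter[OF 2(1)] by (auto simp: gens_def)
    moreover from cell have "set (take j (bword phi (RelC (fst (P ! i))))) \<subseteq> gens Ag \<times> UNIV"
      by (meson set_take_subset order_trans)
    ultimately show ?thesis using prefix[of i] by (simp add: 2(3))
  qed
qed

lemma strip_vertex:
  assumes a: "a \<in> Ag" and q: "q \<in> strip Ag Rs phi u a k" and p: "p \<in> q"
    and g: "g \<in> carrier_vertices Ag Rs phi p"
  obtains r where "r \<in> strip_offsets phi a k" "g = group_elem Ag Rs phi (u @ replicate k (T, True) @ r)"
proof -
  define P where "P = phipow phi k a"
  define base where "base = u @ replicate k (T, True)"
  have carrier_cls: "g \<in> carrier_vertices Ag Rs phi p0" if "q = cls Ag Rs phi p0" for p0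
    using that p g carrier_vertices_xeq[of p0 p] unfolding cls_def by auto
  show ?thesis
  proof (cases "P = []")
    case True
    then obtain \<tau> where "q = cls Ag Rs phi (RE base T \<tau>)"
      using q unfolding strip_def Let_def P_def[symmetric] base_def[symmetric] by auto
    then have "g \<in> carrier_vertices Ag Rs phi (RE base T \<tau>)" by (rule carrier_cls)
    then have "g \<in> skeleton_vertices Ag Rs phi (RE base T \<tau>)" by (simp add: carrier_vertices_def)
    then have "g = group_elem Ag Rs phi (base @ []) \<or> g = group_elem Ag Rs phi (base @ [(T, True)])"
      by (auto simp: skeleton_vertices_def split: if_splits)
    moreover have "[] \<in> strip_offsets phi a k" "[(T, True)] \<in> strip_offsets phi a k"
      unfolding strip_offsets_def by (rule UnI1, simp)+
    ultimately show ?thesis using that[of "[]"] that[of "[(T, True)]"] unfolding base_def by auto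
  next
    case False
    then obtain i where i: "i < length P" and qi: "q \<in> cellimg Ag Rs phi
        (base @ lift (take i P) @ (if snd (P ! i) then [] else [(A (fst (P ! i)), False)]))
        (RelC (fst (P ! i)))"
      using q unfolding strip_def Let_def P_def[symmetric] base_def[symmetric] by auto
    define ext where "ext = (if snd (P ! i) then [] else [(A (fst (P ! i)), False)])"
    define c where "c = RelC (fst (P ! i))"
    obtain z where "q = cls Ag Rs phi (RC (base @ lift (take i P) @ ext) c z)"
      using qi unfolding cellimg_def ext_def c_def by auto
    then have gc: "g \<in> carrier_vertices Ag Rs phi (RC (base @ lift (take i P) @ ext) c z)"
      by (rule carrier_cls)
    have "P ! i \<in> Ag \<times> UNIV"
      using set_phipow_subset[OF a, of k] nth_mem[OF i] unfolding P_def by (rule subsetD)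
    then have c: "c \<in> cells Ag Rs" unfolding c_def cells_def by (auto simp: mem_Times_iff)
    have "g \<in> {group_elem Ag Rs phi (base @ lift (take i P) @ ext @ take j (bword phi c)) | j.
        j \<le> length (bword phi c)}"
      using subsetD[OF carrier_vertices_cell_subset[OF c] gc] by simp
    then obtain j where j: "j \<le> length (bword phi c)"
      "g = group_elem Ag Rs phi (base @ lift (take i P) @ ext @ take j (bword phi c))"
      by blast
    have "ext \<in> {[], [(A (fst (P ! i)), False)]}" unfolding ext_def by simp
    then have "lift (take i P) @ ext @ take j (bword phi c) \<in> strip_offsets phi a k"
      using i j(1) unfolding strip_offsets_def P_def[symmetric] c_def by blast
    then show ?thesis using j(2) unfolding base_def by (intro that) simp_all
  qed
qed

end

lemma carrier_vertices_nonempty: "\<exists>v. group_elem Ag Rs phi v \<in> carrier_vertices Ag Rs phi p"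
proof (cases p)
  case (RC w c z)
  show ?thesis
  proof (cases "cmod z = 1")
    case True
    then show ?thesis using RC by (auto simp: carrier_vertices_def skeleton_vertices_def attach_def Let_def)
  next
    case False
    then show ?thesis using RC by (auto simp: carrier_vertices_def intro!: exI[of _ w] exI[of _ 0])
  qed
qed (auto simp: carrier_vertices_def skeleton_vertices_def)

definition vertex_star :: "'a set \<Rightarrow> ('a \<times> bool) list set \<Rightarrow> ('a \<Rightarrow> ('a \<times> bool) list)
    \<Rightarrow> 'a gword \<Rightarrow> 'a raw set set" where
  "vertex_star Ag Rs phi v =
     {q \<in> Xpts Ag Rs phi. \<exists>p\<in>q. group_elem Ag Rs phi v \<in> carrier_vertices Ag Rs phi p}"

context presentation
begin

lemma Union_vertex_star:
  "\<Union>(vertex_star Ag Rs phi v) = {p \<in> rawpts Ag Rs. group_elem Ag Rs phi v \<in> carrier_vertices Ag Rs phi p}"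
proof (intro equalityI subsetI)
  fix p assume "p \<in> \<Union>(vertex_star Ag Rs phi v)"
  then obtain q p' where q: "q \<in> Xpts Ag Rs phi" "p \<in> q" "p' \<in> q"
    "group_elem Ag Rs phi v \<in> carrier_vertices Ag Rs phi p'"
    unfolding vertex_star_def by blast
  then obtain r where "q = xeq Ag Rs phi `` {r}" unfolding Xpts_def quotient_def by blast
  then have "carrier_vertices Ag Rs phi p = carrier_vertices Ag Rs phi p'"
    using carrier_vertices_xeq q(2,3) by (metis Image_singleton_iff)
  then show "p \<in> {p \<in> rawpts Ag Rs. group_elem Ag Rs phi v \<in> carrier_vertices Ag Rs phi p}"
    using q Union_Xpts_subset by auto
next
  fix p assume p: "p \<in> {p \<in> rawpts Ag Rs. group_elem Ag Rs phi v \<in> carrier_vertices Ag Rs phi p}"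
  then have "cls Ag Rs phi p \<in> Xpts Ag Rs phi" unfolding Xpts_def cls_def by (auto intro: quotientI)
  then show "p \<in> \<Union>(vertex_star Ag Rs phi v)"
    using p mem_cls_self[of p] unfolding vertex_star_def by blast
qed

lemma openin_vertex_star: "openin (cayley_complex Ag Rs phi) (vertex_star Ag Rs phi v)"
  unfolding openin_cayley_complex Union_vertex_star
  using openin_rawtop_star unfolding vertex_star_def by blast

lemma compactin_finite_vertex_stars:
  assumes "compactin (cayley_complex Ag Rs phi) C"
  obtains W where "finite W" "C \<subseteq> (\<Union>v\<in>W. vertex_star Ag Rs phi v)"
proof -
  have "topspace (cayley_complex Ag Rs phi) \<subseteq> Xpts Ag Rs phi"
    unfolding topspace_def openin_cayley_complex by blast
  then have "C \<subseteq> Xpts Ag Rs phi" using assms compactin_subset_topspace by blast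
  moreover have "q \<in> (\<Union>v. vertex_star Ag Rs phi v)" if q: "q \<in> Xpts Ag Rs phi" for q
  proof -
    obtain r where "r \<in> rawpts Ag Rs" "q = cls Ag Rs phi r"
      using q unfolding Xpts_def quotient_def cls_def by blast
    moreover obtain v where "group_elem Ag Rs phi v \<in> carrier_vertices Ag Rs phi r"
      using carrier_vertices_nonempty by blast
    ultimately show ?thesis using q mem_cls_self[of r] unfolding vertex_star_def by blast
  qed
  ultimately have "C \<subseteq> \<Union>(range (vertex_star Ag Rs phi))" by blast
  moreover have "\<forall>U \<in> range (vertex_star Ag Rs phi). openin (cayley_complex Ag Rs phi) U"
    using openin_vertex_star by blast
  ultimately obtain F where F: "finite F" "F \<subseteq> range (vertex_star Ag Rs phi)" "C \<subseteq> \<Union>F"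
    using assms unfolding compactin_def by blast
  then obtain W where "finite W" "F = vertex_star Ag Rs phi ` W" by (meson finite_subset_image)
  with F(3) show ?thesis using that by blast
qed

lemma Lambda_edge_meeting_vertex_star:
  assumes e: "(x, a) \<in> Lambda_edges Ag Rs phi"
    and meet: "H_image_edge Ag Rs phi (x, a) \<inter> vertex_star Ag Rs phi v \<noteq> {}"
  obtains u k r where "valid_word Ag u" "x = cls Ag Rs phi (RV u)" "a \<in> Ag"
    "k \<le> nat (t_exponent v + 2)" "r \<in> strip_offsets phi a k"
    "weq Ag Rs phi v (u @ replicate k (T, True) @ r)"
proof -
  obtain u0 where u0: "x = cls Ag Rs phi (RV u0)" "set u0 \<subseteq> A ` Ag \<times> UNIV" and a: "a \<in> Ag"
    using e unfolding Lambda_edges_def by blast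
  have "valid_word Ag u0" using u0(2) by (auto simp: valid_word_def gens_def)
  define u where "u = (SOME u. valid_word Ag u \<and> cls Ag Rs phi (RV u) = x)"
  have u: "valid_word Ag u \<and> cls Ag Rs phi (RV u) = x"
    unfolding u_def by (rule someI[of _ u0]) (use \<open>valid_word Ag u0\<close> u0(1) in simp)
  then have "(RV u0, RV u) \<in> xeq Ag Rs phi"
    using u0(1) mem_cls_self[of "RV u"] unfolding cls_def by blast
  then have "carrier_vertices Ag Rs phi (RV u0) = carrier_vertices Ag Rs phi (RV u)"
    by (rule carrier_vertices_xeq)
  then have "weq Ag Rs phi u0 u"
    by (simp add: carrier_vertices_def skeleton_vertices_def group_elem_eq_iff)
  then have u_t: "t_exponent u = 0"
    using weq_t_exponent t_exponent_eq_0_if_no_T[OF u0(2)] by fastforce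
  have "H_image_edge Ag Rs phi (x, a) = H_image Ag Rs phi u a"
    unfolding H_image_edge_def u_def by simp
  then obtain q k where "q \<in> strip Ag Rs phi u a k" "q \<in> vertex_star Ag Rs phi v"
    using meet unfolding H_image_def by blast
  then obtain p where "p \<in> q" "group_elem Ag Rs phi v \<in> carrier_vertices Ag Rs phi p"
    unfolding vertex_star_def by blast
  then obtain r where r: "r \<in> strip_offsets phi a k"
    "group_elem Ag Rs phi v = group_elem Ag Rs phi (u @ replicate k (T, True) @ r)"
    using strip_vertex[OF a \<open>q \<in> strip Ag Rs phi u a k\<close>] by blast
  then have vr: "weq Ag Rs phi v (u @ replicate k (T, True) @ r)" by (simp add: group_elem_eq_iff)
  then have "t_exponent v = int k + t_exponent r" using weq_t_exponent u_t by fastforce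
  then have "k \<le> nat (t_exponent v + 2)" using abs_t_exponent_strip_offset[OF r(1)] by linarith
  then show ?thesis using that u a r(1) vr by blast
qed

lemma finite_Lambda_edges_meeting_vertex_star:
  assumes "finite Ag"
  shows "finite {e \<in> Lambda_edges Ag Rs phi. H_image_edge Ag Rs phi e \<inter> vertex_star Ag Rs phi v \<noteq> {}}"
proof -
  define Idx where "Idx = (SIGMA a:Ag. SIGMA k:{..nat (t_exponent v + 2)}. strip_offsets phi a k)"
  define edge :: "'a \<times> nat \<times> 'a gword \<Rightarrow> 'a raw set \<times> 'a" where "edge = (\<lambda>(a, k, r).
    (cls Ag Rs phi (RV (SOME u. valid_word Ag u \<and> weq Ag Rs phi v (u @ replicate k (T, True) @ r))), a))"
  have "finite Idx"
    unfolding Idx_def using assms finite_strip_offsets by (intro finite_SigmaI) auto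
  moreover have "{e \<in> Lambda_edges Ag Rs phi. H_image_edge Ag Rs phi e \<inter> vertex_star Ag Rs phi v \<noteq> {}}
      \<subseteq> edge ` Idx"
  proof
    fix e assume "e \<in> {e \<in> Lambda_edges Ag Rs phi. H_image_edge Ag Rs phi e \<inter> vertex_star Ag Rs phi v \<noteq> {}}"
    moreover obtain x a where xa: "e = (x, a)" by fastforce
    ultimately have "(x, a) \<in> Lambda_edges Ag Rs phi"
      "H_image_edge Ag Rs phi (x, a) \<inter> vertex_star Ag Rs phi v \<noteq> {}" by simp_all
    then obtain u k r where u: "valid_word Ag u" "x = cls Ag Rs phi (RV u)" and a: "a \<in> Ag"
      and k: "k \<le> nat (t_exponent v + 2)" and r: "r \<in> strip_offsets phi a k"
      and vu: "weq Ag Rs phi v (u @ replicate k (T, True) @ r)"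
      by (rule Lambda_edge_meeting_vertex_star)
    define u' where "u' = (SOME u. valid_word Ag u \<and> weq Ag Rs phi v (u @ replicate k (T, True) @ r))"
    have u': "valid_word Ag u' \<and> weq Ag Rs phi v (u' @ replicate k (T, True) @ r)"
      unfolding u'_def by (rule someI[of _ u]) (use u vu in simp)
    have "set (replicate k (T, True) @ r) \<subseteq> gens Ag \<times> UNIV"
      using set_strip_offset_subset[OF a r] by (auto simp: gens_def)
    moreover have "weq Ag Rs phi (u @ replicate k (T, True) @ r) (u' @ replicate k (T, True) @ r)"
      using vu u' by (meson weq_sym weq_trans)
    ultimately have "weq Ag Rs phi u u'" by (rule weq_right_cancel)
    then have "(RV u, RV u') \<in> xgen Ag Rs phi" using u u' by (intro xgen.intros(1)) auto
    then have "(RV u, RV u') \<in> xeq Ag Rs phi" unfolding xeq_def by blast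
    then have "cls Ag Rs phi (RV u) = cls Ag Rs phi (RV u')" by (rule cls_eq)
    then have "edge (a, k, r) = (x, a)" using u(2) by (simp add: edge_def u'_def)
    moreover have "(a, k, r) \<in> Idx" unfolding Idx_def using a k r by blast
    ultimately show "e \<in> edge ` Idx" unfolding xa by (metis image_eqI)
  qed
  ultimately show ?thesis by (rule finite_surj)
qed

end

theorem lemma3p2:
  fixes Ag :: "'a set" and Rs :: "('a \<times> bool) list set"
    and phi :: "'a \<Rightarrow> ('a \<times> bool) list" and C :: "'a raw set set"
  assumes "finite Ag"
    and "finite Rs" and "\<forall>r \<in> Rs. free_word Ag r"
    and "\<forall>a \<in> Ag. free_word Ag (phi a)"
    and "compactin (cayley_complex Ag Rs phi) C"
  shows "finite {e \<in> Lambda_edges Ag Rs phi. H_image_edge Ag Rs phi e \<inter> C \<noteq> {}}"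
proof -
  interpret presentation Ag Rs phi
    using assms(3,4) by unfold_locales (auto simp: free_word_def)
  obtain W where W: "finite W" "C \<subseteq> (\<Union>v\<in>W. vertex_star Ag Rs phi v)"
    using compactin_finite_vertex_stars[OF assms(5)] .
  then have "{e \<in> Lambda_edges Ag Rs phi. H_image_edge Ag Rs phi e \<inter> C \<noteq> {}} \<subseteq>
      (\<Union>v\<in>W. {e \<in> Lambda_edges Ag Rs phi. H_image_edge Ag Rs phi e \<inter> vertex_star Ag Rs phi v \<noteq> {}})"
    by blast
  moreover have "finite (\<Union>v\<in>W.
      {e \<in> Lambda_edges Ag Rs phi. H_image_edge Ag Rs phi e \<inter> vertex_star Ag Rs phi v \<noteq> {}})"
    using W(1) finite_Lambda_edges_meeting_vertex_star[OF assms(1)] by (rule finite_UN_I)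
  ultimately show ?thesis by (rule finite_subset)
qed

end
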